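(* Let $q\ge5$ be prime and $r,s\ge2$ integers. Then $\chi_D(LG_q\otimes K_{r,s})=r+s+1$.
   Context: Let $V=\mathbb{F}_q^3$, $\mathcal{P}$ the set of $1$-dimensional subspaces ("points") and $\mathcal{L}$ the set of $2$-dimensional subspaces ("lines") of $V$. The graph $LG_q\otimes K_{r,s}$ has vertex set $(\mathcal{P}\times[r])\sqcup(\mathcal{L}\times[s])$, where $[m]=\{1,\dots,m\}$, and for $p\in\mathcal{P}$, $l\in\mathcal{L}$, $i\in[r]$, $j\in[s]$, the vertex $(p,i)$ is adjacent to $(l,j)$ iff $p\subset l$; there are no other edges. A coloring is distinguishing if the only graph automorphism mapping every color class onto itself is the identity; $\chi_D(G)$ is the minimum number of colors of a proper distinguishing coloring of $G$. *)

theory Defs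
  imports Main "HOL-Computational_Algebra.Primes"
begin

definition graph_aut :: "'v set \<Rightarrow> ('v \<Rightarrow> 'v \<Rightarrow> bool) \<Rightarrow> ('v \<Rightarrow> 'v) \<Rightarrow> bool" where
  "graph_aut V E f \<longleftrightarrow> bij_betw f V V \<and> (\<forall>u\<in>V. \<forall>v\<in>V. E u v \<longleftrightarrow> E (f u) (f v))"

definition proper_coloring :: "'v set \<Rightarrow> ('v \<Rightarrow> 'v \<Rightarrow> bool) \<Rightarrow> ('v \<Rightarrow> nat) \<Rightarrow> bool" where
  "proper_coloring V E c \<longleftrightarrow> (\<forall>u\<in>V. \<forall>v\<in>V. E u v \<longrightarrow> c u \<noteq> c v)"

definition distinguishing :: "'v set \<Rightarrow> ('v \<Rightarrow> 'v \<Rightarrow> bool) \<Rightarrow> ('v \<Rightarrow> nat) \<Rightarrow> bool" where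
  "distinguishing V E c \<longleftrightarrow>
     (\<forall>f. graph_aut V E f \<and> (\<forall>v\<in>V. c (f v) = c v) \<longrightarrow> (\<forall>v\<in>V. f v = v))"

definition chi_D :: "'v set \<Rightarrow> ('v \<Rightarrow> 'v \<Rightarrow> bool) \<Rightarrow> nat" where
  "chi_D V E = (LEAST k. \<exists>c. c ` V \<subseteq> {..<k} \<and> proper_coloring V E c \<and> distinguishing V E c)"

type_synonym vec3 = "nat \<times> nat \<times> nat"

definition Vq :: "nat \<Rightarrow> vec3 set" where
  "Vq q = {0..<q} \<times> {0..<q} \<times> {0..<q}"

fun vadd :: "nat \<Rightarrow> vec3 \<Rightarrow> vec3 \<Rightarrow> vec3" where
  "vadd q (a, b, c) (d, e, f) = ((a + d) mod q, (b + e) mod q, (c + f) mod q)"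

fun smul :: "nat \<Rightarrow> nat \<Rightarrow> vec3 \<Rightarrow> vec3" where
  "smul q k (a, b, c) = ((k * a) mod q, (k * b) mod q, (k * c) mod q)"

definition points :: "nat \<Rightarrow> vec3 set set" where
  "points q = {{smul q k v | k. k < q} | v. v \<in> Vq q \<and> v \<noteq> (0, 0, 0)}"

definition lines :: "nat \<Rightarrow> vec3 set set" where
  "lines q = {{vadd q (smul q a u) (smul q b w) | a b. a < q \<and> b < q} | u w.
      u \<in> Vq q \<and> w \<in> Vq q \<and>
      (\<forall>a<q. \<forall>b<q. vadd q (smul q a u) (smul q b w) = (0, 0, 0) \<longrightarrow> a = 0 \<and> b = 0)}"

type_synonym lgvert = "(vec3 set \<times> nat) + (vec3 set \<times> nat)"

definition LGK_verts :: "nat \<Rightarrow> nat \<Rightarrow> nat \<Rightarrow> lgvert set" where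
  "LGK_verts q r s = Inl ` (points q \<times> {1..r}) \<union> Inr ` (lines q \<times> {1..s})"

fun LGK_adj :: "lgvert \<Rightarrow> lgvert \<Rightarrow> bool" where
  "LGK_adj (Inl (p, i)) (Inr (l, j)) = (p \<subseteq> l)"
| "LGK_adj (Inr (l, j)) (Inl (p, i)) = (p \<subseteq> l)"
| "LGK_adj _ _ = False"

end

theory Submission
  imports Defs
begin

text \<open>Upper bound: colour copy \<open>i\<close> of a point by \<open>i - 1\<close> and copy \<open>j\<close> of a line by
  \<open>r + j - 1\<close>, and use one extra colour to mark a frame of the plane. A colour-preserving
  automorphism keeps points and lines apart and permutes the copies of each vertex (they are
  twins), so it induces a collineation of \<open>PG(2, q)\<close> fixing the frame; such a collineation is
  the identity, and then the colours pin down the copies.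

  Lower bound: in a distinguishing colouring the copies of a vertex, being twins, get distinct
  colours, and an incident point and line together use \<open>r + s\<close> colours. With only \<open>r + s\<close>
  colours the colour set of a point is the complement of that of any incident line, so all
  points share one colour set and all lines another. Then the collineation
  \<open>(x, y, z) \<mapsto> (y, x, z)\<close> lifts to a non-trivial colour-preserving automorphism.\<close>

section \<open>Points and lines of the projective plane over \<open>\<int>/q\<close>\<close>

definition span1 :: "nat \<Rightarrow> vec3 \<Rightarrow> vec3 set" where
  "span1 q v = {smul q k v | k. k < q}"

definition span2 :: "nat \<Rightarrow> vec3 \<Rightarrow> vec3 \<Rightarrow> vec3 set" where
  "span2 q u w = {vadd q (smul q a u) (smul q b w) | a b. a < q \<and> b < q}"

definition lin_indep :: "nat \<Rightarrow> vec3 \<Rightarrow> vec3 \<Rightarrow> bool" where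
  "lin_indep q u w \<longleftrightarrow>
     (\<forall>a<q. \<forall>b<q. vadd q (smul q a u) (smul q b w) = (0, 0, 0) \<longrightarrow> a = 0 \<and> b = 0)"

lemma mem_points_iff: "p \<in> points q \<longleftrightarrow> (\<exists>v. v \<in> Vq q \<and> v \<noteq> (0, 0, 0) \<and> p = span1 q v)"
  unfolding points_def span1_def by blast

lemma mem_lines_iff:
  "l \<in> lines q \<longleftrightarrow> (\<exists>u w. u \<in> Vq q \<and> w \<in> Vq q \<and> lin_indep q u w \<and> l = span2 q u w)"
  unfolding lines_def span2_def lin_indep_def by blast

lemma mem_Vq_iff [simp]: "(a, b, c) \<in> Vq q \<longleftrightarrow> a < q \<and> b < q \<and> c < q"
  by (simp add: Vq_def)

lemma card_Vq: "card (Vq q) = q * q * q"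
  unfolding Vq_def by (simp add: card_cartesian_product)

lemma lincomb_eq: "vadd q (smul q a (u1, u2, u3)) (smul q b (w1, w2, w3)) =
    ((a * u1 + b * w1) mod q, (a * u2 + b * w2) mod q, (a * u3 + b * w3) mod q)"
  by (simp add: mod_add_eq)

lemma mod_add_diff_eq_0_imp_eq:
  assumes "(a::nat) < q" "a' < q" "(a + (q - a')) mod q = 0"
  shows "a = a'"
proof (cases "a' \<le> a")
  case True
  then have "(a + (q - a')) mod q = a - a'"
    using assms(1,2) by (simp add: mod_if)
  then show ?thesis using assms(3) True by simp
next
  case False
  then have "(a + (q - a')) mod q = a + (q - a')" using assms(1,2) by simp
  then show ?thesis using assms(2,3) False by simp
qed

locale prime_plane =
  fixes q :: nat
  assumes prime_q: "prime q"
begin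

abbreviation zero3 :: vec3 where "zero3 \<equiv> (0, 0, 0)"

abbreviation lc :: "vec3 \<Rightarrow> vec3 \<Rightarrow> nat \<Rightarrow> nat \<Rightarrow> vec3" where
  "lc u w a b \<equiv> vadd q (smul q a u) (smul q b w)"

lemma one_less_q: "1 < q"
  using prime_q prime_gt_1_nat by blast

lemma q_pos: "0 < q"
  using one_less_q by simp

lemma smul_Vq [simp]: "smul q k v \<in> Vq q"
  using q_pos by (cases v rule: prod_cases3) auto

lemma vadd_Vq [simp]: "vadd q u v \<in> Vq q"
  using q_pos by (cases u rule: prod_cases3, cases v rule: prod_cases3) auto

lemma smul_smul: "smul q j (smul q k v) = smul q (j * k) v"
  by (cases v rule: prod_cases3) (simp add: mod_simps mult.assoc)

lemma vadd_assoc: "vadd q (vadd q x y) z = vadd q x (vadd q y z)"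
  by (cases x rule: prod_cases3, cases y rule: prod_cases3, cases z rule: prod_cases3)
    (simp only: vadd.simps mod_add_left_eq mod_add_right_eq add.assoc)

lemma smul_add: "vadd q (smul q a x) (smul q b x) = smul q (a + b) x"
  by (cases x rule: prod_cases3) (simp add: mod_simps distrib_right)

lemma smul_mod: "smul q (k mod q) x = smul q k x"
  by (cases x rule: prod_cases3) (simp add: mod_simps)

lemma smul_0 [simp]: "smul q 0 x = zero3"
  by (cases x rule: prod_cases3) simp

lemma smul_q: "smul q q x = zero3"
  by (cases x rule: prod_cases3) simp

lemma smul_1: "x \<in> Vq q \<Longrightarrow> smul q 1 x = x"
  by (cases x rule: prod_cases3) simp

lemma vadd_zero_left: "x \<in> Vq q \<Longrightarrow> vadd q zero3 x = x"
  by (cases x rule: prod_cases3) simp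

lemma vadd_zero_right: "x \<in> Vq q \<Longrightarrow> vadd q x zero3 = x"
  by (cases x rule: prod_cases3) simp

lemma smul_eq_zero3_iff:
  assumes x: "x \<in> Vq q" and m: "0 < m" "m < q"
  shows "smul q m x = zero3 \<longleftrightarrow> x = zero3"
proof -
  have "(m * c) mod q = 0 \<longleftrightarrow> c = 0" if "c < q" for c
  proof -
    have "\<not> q dvd m" using m by (meson dvd_imp_le not_le)
    then have "(m * c) mod q = 0 \<longleftrightarrow> q dvd c"
      using prime_dvd_mult_iff[OF prime_q, of m c] by (simp add: dvd_eq_mod_eq_0)
    also have "\<dots> \<longleftrightarrow> c = 0" using that by (metis dvd_0_right dvd_imp_le not_le gr0I)
    finally show ?thesis .
  qed
  with x show ?thesis by (cases x rule: prod_cases3) auto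
qed

lemma lc_add: "vadd q (lc u w a b) (lc u w c d) = lc u w (a + c) (b + d)"
  by (cases u rule: prod_cases3, cases w rule: prod_cases3)
    (simp add: lincomb_eq mod_add_eq algebra_simps)

lemma lc_smul: "smul q k (lc u w a b) = lc u w (k * a) (k * b)"
  by (cases u rule: prod_cases3, cases w rule: prod_cases3)
    (simp add: lincomb_eq mod_simps algebra_simps)

lemma lc_mod: "lc u w (a mod q) (b mod q) = lc u w a b"
  by (simp add: smul_mod)

lemma lin_indepD: "lin_indep q u w \<Longrightarrow> a < q \<Longrightarrow> b < q \<Longrightarrow> lc u w a b = zero3 \<Longrightarrow> a = 0 \<and> b = 0"
  unfolding lin_indep_def by blast

text \<open>Coefficients are natural numbers, so injectivity adds the complementary combination
  with coefficients \<open>q - a'\<close>, \<open>q - b'\<close> to both sides instead of subtracting.\<close>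

lemma lc_inj:
  assumes "lin_indep q u w" "a < q" "b < q" "a' < q" "b' < q"
    and eq: "lc u w a b = lc u w a' b'"
  shows "a = a' \<and> b = b'"
proof -
  have q_sum: "a' + (q - a') = q" "b' + (q - b') = q" using assms by auto
  have "lc u w (a + (q - a')) (b + (q - b')) = vadd q (lc u w a b) (lc u w (q - a') (q - b'))"
    by (simp only: lc_add)
  also have "\<dots> = vadd q (lc u w a' b') (lc u w (q - a') (q - b'))" by (simp only: eq)
  also have "\<dots> = zero3" by (simp only: lc_add q_sum smul_q) (simp add: vadd_zero_left)
  finally have "lc u w ((a + (q - a')) mod q) ((b + (q - b')) mod q) = zero3"
    by (simp only: lc_mod)
  then have "(a + (q - a')) mod q = 0 \<and> (b + (q - b')) mod q = 0"
    by (rule lin_indepD[OF assms(1) mod_less_divisor[OF q_pos] mod_less_divisor[OF q_pos]])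
  then show ?thesis
    using mod_add_diff_eq_0_imp_eq[OF assms(2,4)] mod_add_diff_eq_0_imp_eq[OF assms(3,5)] by simp
qed

lemma mem_span2_iff: "v \<in> span2 q u w \<longleftrightarrow> (\<exists>a b. a < q \<and> b < q \<and> v = lc u w a b)"
  unfolding span2_def by auto

lemma span2_eq_image: "span2 q u w = (\<lambda>(a, b). lc u w a b) ` ({..<q} \<times> {..<q})"
  unfolding span2_def by auto

lemma finite_span2: "finite (span2 q u w)"
  unfolding span2_eq_image by simp

lemma card_span2:
  assumes "lin_indep q u w"
  shows "card (span2 q u w) = q * q"
proof -
  have "inj_on (\<lambda>(a, b). lc u w a b) ({..<q} \<times> {..<q})"
    using lc_inj[OF assms] by (auto simp: inj_on_def)
  then show ?thesis unfolding span2_eq_image by (simp add: card_image card_cartesian_product)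
qed

lemma span2_subset_Vq: "span2 q u w \<subseteq> Vq q"
  unfolding span2_def by auto

lemma span2_memI: "a < q \<Longrightarrow> b < q \<Longrightarrow> lc u w a b \<in> span2 q u w"
  unfolding span2_def by blast

lemma zero3_in_span2: "zero3 \<in> span2 q u w"
  using span2_memI[of 0 0 u w] q_pos by simp

lemma span2_left: "u \<in> Vq q \<Longrightarrow> u \<in> span2 q u w"
  using span2_memI[of 1 0 u w] one_less_q by (simp add: smul_1 vadd_zero_right del: One_nat_def)

lemma span2_right: "w \<in> Vq q \<Longrightarrow> w \<in> span2 q u w"
  using span2_memI[of 0 1 u w] one_less_q by (simp add: smul_1 vadd_zero_left del: One_nat_def)

lemma span2_lc_closed:
  assumes "x \<in> span2 q u w" "y \<in> span2 q u w"
  shows "lc x y \<alpha> \<beta> \<in> span2 q u w"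
proof -
  obtain a b where x: "x = lc u w a b" using assms(1) unfolding span2_def by blast
  obtain c d where y: "y = lc u w c d" using assms(2) unfolding span2_def by blast
  have "lc x y \<alpha> \<beta> = lc u w ((\<alpha> * a + \<beta> * c) mod q) ((\<alpha> * b + \<beta> * d) mod q)"
    unfolding x y lc_smul lc_add lc_mod ..
  then show ?thesis using span2_memI q_pos by simp
qed

lemma span2_smul_closed: "x \<in> span2 q u w \<Longrightarrow> smul q k x \<in> span2 q u w"
  using span2_lc_closed[of x u w x k 0] span2_subset_Vq by (auto simp: vadd_zero_right)

lemma span2_subset: "x \<in> span2 q u w \<Longrightarrow> y \<in> span2 q u w \<Longrightarrow> span2 q x y \<subseteq> span2 q u w"
  using span2_lc_closed unfolding span2_def[of q x y] by blast

lemma span1_eq_image: "span1 q v = (\<lambda>k. smul q k v) ` {..<q}"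
  unfolding span1_def by auto

lemma finite_span1: "finite (span1 q v)"
  unfolding span1_eq_image by simp

lemma span1_subset_Vq: "span1 q v \<subseteq> Vq q"
  unfolding span1_def by auto

lemma smul_in_span1: "smul q k v \<in> span1 q v"
  using q_pos unfolding span1_def by (intro CollectI exI[of _ "k mod q"]) (simp add: smul_mod)

lemma span1_self: "v \<in> Vq q \<Longrightarrow> v \<in> span1 q v"
  using smul_in_span1[of 1 v] by (simp add: smul_1 del: One_nat_def)

lemma span1_subset: "x \<in> span1 q v \<Longrightarrow> span1 q x \<subseteq> span1 q v"
proof
  fix y assume "x \<in> span1 q v" "y \<in> span1 q x"
  then obtain j k where "x = smul q j v" "y = smul q k x" unfolding span1_def by blast
  then show "y \<in> span1 q v" by (simp add: smul_smul smul_in_span1)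
qed

lemma smul_inj:
  assumes v: "v \<in> Vq q" "v \<noteq> zero3" and k: "k < q" "k' < q"
    and eq: "smul q k v = smul q k' v"
  shows "k = k'"
proof -
  have q_sum: "k' + (q - k') = q" using k by simp
  have "smul q (k + (q - k')) v = vadd q (smul q k v) (smul q (q - k') v)" by (simp only: smul_add)
  also have "\<dots> = vadd q (smul q k' v) (smul q (q - k') v)" by (simp only: eq)
  also have "\<dots> = zero3" by (simp only: smul_add q_sum smul_q)
  finally have "smul q ((k + (q - k')) mod q) v = zero3" by (simp only: smul_mod)
  then have "(k + (q - k')) mod q = 0"
    using smul_eq_zero3_iff[OF v(1) _ mod_less_divisor[OF q_pos], of "k + (q - k')"] v(2)
    by auto
  then show ?thesis using mod_add_diff_eq_0_imp_eq[OF k] by simp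
qed

lemma card_span1:
  assumes "v \<in> Vq q" "v \<noteq> zero3"
  shows "card (span1 q v) = q"
proof -
  have "inj_on (\<lambda>k. smul q k v) {..<q}"
    using smul_inj[OF assms] by (auto simp: inj_on_def)
  then show ?thesis unfolding span1_eq_image by (simp add: card_image)
qed

lemma span1_eq:
  assumes "w \<in> span1 q v" "w \<noteq> zero3" "v \<in> Vq q"
  shows "span1 q w = span1 q v"
proof -
  have "v \<noteq> zero3" using assms(1,2) unfolding span1_def by auto
  moreover have "w \<in> Vq q" using assms(1) span1_subset_Vq by blast
  ultimately show ?thesis
    using span1_subset[OF assms(1)] card_span1 assms(2,3) finite_span1
    by (simp add: card_subset_eq)
qed

lemma span1_subset_span2_iff:
  assumes "v \<in> Vq q"
  shows "span1 q v \<subseteq> span2 q u w \<longleftrightarrow> v \<in> span2 q u w"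
proof
  show "span1 q v \<subseteq> span2 q u w \<Longrightarrow> v \<in> span2 q u w" using span1_self[OF assms] by blast
  show "v \<in> span2 q u w \<Longrightarrow> span1 q v \<subseteq> span2 q u w"
    unfolding span1_def using span2_smul_closed[of v u w] by blast
qed

lemma span1_subset_line_iff:
  assumes "l \<in> lines q" "v \<in> Vq q"
  shows "span1 q v \<subseteq> l \<longleftrightarrow> v \<in> l"
proof -
  obtain u w where "l = span2 q u w" using assms(1) unfolding mem_lines_iff by auto
  then show ?thesis using span1_subset_span2_iff[OF assms(2)] by simp
qed

lemma span1_in_points: "v \<in> Vq q \<Longrightarrow> v \<noteq> zero3 \<Longrightarrow> span1 q v \<in> points q"
  unfolding mem_points_iff by blast

lemma span2_in_lines: "u \<in> Vq q \<Longrightarrow> w \<in> Vq q \<Longrightarrow> lin_indep q u w \<Longrightarrow> span2 q u w \<in> lines q"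
  unfolding mem_lines_iff by blast

lemma lin_indepI:
  "(\<And>a b. a < q \<Longrightarrow> b < q \<Longrightarrow> lc u w a b = zero3 \<Longrightarrow> a = 0 \<and> b = 0) \<Longrightarrow> lin_indep q u w"
  unfolding lin_indep_def by blast

lemma lin_indep_if_span1_neq:
  assumes v: "v \<in> Vq q" "v \<noteq> zero3" and w: "w \<in> Vq q" "w \<noteq> zero3"
    and neq: "span1 q v \<noteq> span1 q w"
  shows "lin_indep q v w"
proof (rule lin_indepI)
  fix a b assume a: "a < q" and b: "b < q" and eq: "lc v w a b = zero3"
  show "a = 0 \<and> b = 0"
  proof (cases "a = 0")
    case True
    then have "smul q b w = zero3" using eq by (simp add: vadd_zero_left)
    then show ?thesis using True smul_eq_zero3_iff[OF w(1) _ b] w(2) by (cases "b = 0") auto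
  next
    case False
    have av: "smul q a v \<noteq> zero3" using smul_eq_zero3_iff[OF v(1) _ a] v(2) False by simp
    have "smul q (q - b) w = vadd q (lc v w a b) (smul q (q - b) w)"
      by (simp only: eq vadd_zero_left smul_Vq)
    also have "\<dots> = vadd q (smul q a v) (smul q q w)"
      using b by (simp only: vadd_assoc smul_add) simp
    also have "\<dots> = smul q a v" by (simp only: smul_q vadd_zero_right smul_Vq)
    finally have "smul q a v \<in> span1 q w" by (metis smul_in_span1)
    then have "span1 q v = span1 q w"
      using span1_eq[OF smul_in_span1 av v(1)] span1_eq av w(1) by metis
    then show ?thesis using neq by simp
  qed
qed

lemma line_eq_span2:
  assumes l: "l \<in> lines q" and v1: "v1 \<in> Vq q" "v1 \<noteq> zero3" and v2: "v2 \<in> Vq q" "v2 \<noteq> zero3"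
    and neq: "span1 q v1 \<noteq> span1 q v2" and on: "span1 q v1 \<subseteq> l" "span1 q v2 \<subseteq> l"
  shows "l = span2 q v1 v2"
proof -
  obtain u w where uw: "u \<in> Vq q" "w \<in> Vq q" "lin_indep q u w" "l = span2 q u w"
    using l mem_lines_iff by blast
  have "v1 \<in> l" "v2 \<in> l" using on span1_self v1(1) v2(1) by blast+
  then have "span2 q v1 v2 \<subseteq> l" using span2_subset uw(4) by simp
  moreover have "card (span2 q v1 v2) = card l"
    using card_span2 lin_indep_if_span1_neq[OF v1 v2 neq] uw(3,4) by simp
  ultimately show ?thesis using finite_span2 uw(4) by (metis card_subset_eq)
qed

lemma line_through_two_points_unique:
  assumes "p \<in> points q" "p' \<in> points q" "p \<noteq> p'" "l \<in> lines q" "l' \<in> lines q"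
    "p \<subseteq> l" "p' \<subseteq> l" "p \<subseteq> l'" "p' \<subseteq> l'"
  shows "l = l'"
proof -
  obtain v where v: "v \<in> Vq q" "v \<noteq> zero3" "p = span1 q v" using assms(1) mem_points_iff by blast
  obtain v' where v': "v' \<in> Vq q" "v' \<noteq> zero3" "p' = span1 q v'" using assms(2) mem_points_iff by blast
  show ?thesis
    using line_eq_span2[OF assms(4) v(1,2) v'(1,2)] line_eq_span2[OF assms(5) v(1,2) v'(1,2)]
      assms v v' by simp
qed

lemma line_through_two_points:
  assumes "v \<in> Vq q" "v \<noteq> zero3" "v' \<in> Vq q" "v' \<noteq> zero3" "span1 q v \<noteq> span1 q v'"
  shows "span2 q v v' \<in> lines q" "span1 q v \<subseteq> span2 q v v'" "span1 q v' \<subseteq> span2 q v v'"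
  using assms span2_in_lines lin_indep_if_span1_neq span1_subset_span2_iff span2_left span2_right
  by auto

lemma line_through_avoiding:
  assumes "p \<in> points q" "p' \<in> points q" "p \<noteq> p'"
  shows "\<exists>l \<in> lines q. p \<subseteq> l \<and> \<not> p' \<subseteq> l"
proof -
  obtain v where v: "v \<in> Vq q" "v \<noteq> zero3" "p = span1 q v" using assms(1) mem_points_iff by blast
  obtain v' where v': "v' \<in> Vq q" "v' \<noteq> zero3" "p' = span1 q v'" using assms(2) mem_points_iff by blast
  let ?W = "span2 q v v'"
  have "card ?W < card (Vq q)"
    using card_span2 lin_indep_if_span1_neq[OF v(1,2) v'(1,2)] assms(3) v v' one_less_q
    by (simp add: card_Vq)
  then obtain x where x: "x \<in> Vq q" "x \<notin> ?W" by (metis card_mono finite_span2 not_le subsetI)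
  have x0: "x \<noteq> zero3" using x zero3_in_span2 by metis
  have "span1 q v \<noteq> span1 q x"
    using x span1_self span1_subset_span2_iff span2_left v(1) by blast
  note l = line_through_two_points[OF v(1,2) x(1) x0 this]
  have "\<not> p' \<subseteq> span2 q v x"
  proof
    assume "p' \<subseteq> span2 q v x"
    then have "span2 q v x = ?W" using line_eq_span2[OF l(1) v(1,2) v'(1,2)] assms v v' l by simp
    then show False using span2_right x by blast
  qed
  then show ?thesis using l v(3) by blast
qed

lemma exists_line_through:
  assumes "p \<in> points q"
  shows "\<exists>l \<in> lines q. p \<subseteq> l"
proof -
  have "span1 q (1, 0, 0) \<noteq> span1 q (0, 1, 0)"
    using span1_self[of "(1, 0, 0)"] one_less_q unfolding span1_def by auto
  moreover have "span1 q (1, 0, 0) \<in> points q" "span1 q (0, 1, 0) \<in> points q"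
    using span1_in_points one_less_q by auto
  ultimately show ?thesis using line_through_avoiding assms by metis
qed

lemma exists_line_through_two_points:
  assumes "p \<in> points q" "p' \<in> points q"
  shows "\<exists>l \<in> lines q. p \<subseteq> l \<and> p' \<subseteq> l"
proof (cases "p = p'")
  case True
  then show ?thesis using exists_line_through assms(1) by blast
next
  case False
  obtain v where v: "v \<in> Vq q" "v \<noteq> zero3" "p = span1 q v" using assms(1) mem_points_iff by blast
  obtain v' where v': "v' \<in> Vq q" "v' \<noteq> zero3" "p' = span1 q v'" using assms(2) mem_points_iff by blast
  show ?thesis using line_through_two_points[OF v(1,2) v'(1,2)] False v(3) v'(3) by blast
qed

lemma point_on_avoiding:
  assumes "l \<in> lines q" "l' \<in> lines q" "l \<noteq> l'"
  shows "\<exists>p \<in> points q. p \<subseteq> l \<and> \<not> p \<subseteq> l'"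
proof -
  obtain u w where uw: "lin_indep q u w" "l = span2 q u w" using assms(1) unfolding mem_lines_iff by auto
  obtain u' w' where uw': "lin_indep q u' w'" "l' = span2 q u' w'"
    using assms(2) unfolding mem_lines_iff by auto
  have "card l = card l'" using uw uw' by (simp add: card_span2)
  then have "\<not> l \<subseteq> l'" using assms(3) uw'(2) finite_span2 card_subset_eq by blast
  then obtain x where x: "x \<in> l" "x \<notin> l'" by blast
  have xV: "x \<in> Vq q" using x(1) uw(2) span2_subset_Vq by blast
  have "x \<noteq> zero3" using x(2) uw'(2) zero3_in_span2[of u' w'] by auto
  then have "span1 q x \<in> points q" using span1_in_points xV by blast
  moreover have "span1 q x \<subseteq> l" "\<not> span1 q x \<subseteq> l'"
    using x span1_subset_line_iff[OF assms(1) xV] span1_subset_line_iff[OF assms(2) xV] by auto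
  ultimately show ?thesis by blast
qed

lemma line_has_two_points:
  assumes "l \<in> lines q"
  obtains u w where "u \<in> Vq q" "w \<in> Vq q" "u \<noteq> zero3" "w \<noteq> zero3"
    "span1 q u \<noteq> span1 q w" "span1 q u \<subseteq> l" "span1 q w \<subseteq> l"
proof -
  obtain u w where uw: "u \<in> Vq q" "w \<in> Vq q" "lin_indep q u w" "l = span2 q u w"
    using assms unfolding mem_lines_iff by auto
  have "u \<noteq> zero3" "w \<noteq> zero3"
    using lin_indepD[OF uw(3) one_less_q q_pos] lin_indepD[OF uw(3) q_pos one_less_q]
    by (auto simp: vadd_zero_left)
  moreover have "span1 q u \<noteq> span1 q w"
  proof
    assume "span1 q u = span1 q w"
    then obtain k where k: "k < q" "u = smul q k w"
      using span1_self[OF uw(1)] unfolding span1_def by auto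
    have "lc u w 1 (q - k) = vadd q (smul q k w) (smul q (q - k) w)"
      by (simp only: smul_1 smul_Vq k(2))
    also have "\<dots> = zero3" using k by (simp only: smul_add) (simp add: smul_q)
    finally have "lc u w 1 ((q - k) mod q) = zero3" by (simp only: smul_mod)
    then show False using lin_indepD[OF uw(3) one_less_q mod_less_divisor[OF q_pos]] by simp
  qed
  moreover have "span1 q u \<subseteq> l" "span1 q w \<subseteq> l"
    using uw span1_subset_span2_iff span2_left span2_right by auto
  ultimately show ?thesis using that uw(1,2) by blast
qed

end

section \<open>Collineations fixing a frame\<close>

lemma neq_by_witness: "x \<in> A \<Longrightarrow> x \<notin> B \<Longrightarrow> A \<noteq> B"
  by blast

context prime_plane
begin

abbreviation "e1 \<equiv> span1 q (1, 0, 0)"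
abbreviation "e2 \<equiv> span1 q (0, 1, 0)"
abbreviation "e3 \<equiv> span1 q (0, 0, 1)"

text \<open>Lines are named after their equations: \<open>line_yx k\<close> is \<open>y = k x\<close>,
  \<open>line_yxz k\<close> is \<open>y = k x + z\<close>, \<open>line_x0\<close> is \<open>x = 0\<close>, \<open>line_xyz\<close> is \<open>x = y + z\<close>, etc.\<close>

definition "line_yx k = span2 q (1, k, 0) (0, 0, 1)"
definition "line_zx k = span2 q (1, 0, k) (0, 1, 0)"
definition "line_zy k = span2 q (0, 1, k) (1, 0, 0)"
definition "line_yxz k = span2 q (1, k, 0) (0, 1, 1)"
definition "line_zxy k = span2 q (1, 0, k) (0, 1, 1)"
definition "line_x0 = span2 q (0, 1, 0) (0, 0, 1)"
definition "line_xyz = span2 q (1, 1, 0) (1, 0, 1)"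

lemma mem_line_yx: "(x, y, z) \<in> line_yx k \<longleftrightarrow> x < q \<and> y < q \<and> z < q \<and> y = (k * x) mod q"
  unfolding line_yx_def mem_span2_iff lincomb_eq
  by (rule iffI, force simp: mod_simps mult.commute add.commute,
      (rule exI[of _ x], rule exI[of _ z]), simp add: mod_simps mult.commute add.commute)

lemma mem_line_zx: "(x, y, z) \<in> line_zx k \<longleftrightarrow> x < q \<and> y < q \<and> z < q \<and> z = (k * x) mod q"
  unfolding line_zx_def mem_span2_iff lincomb_eq
  by (rule iffI, force simp: mod_simps mult.commute add.commute,
      (rule exI[of _ x], rule exI[of _ y]), simp add: mod_simps mult.commute add.commute)

lemma mem_line_zy: "(x, y, z) \<in> line_zy k \<longleftrightarrow> x < q \<and> y < q \<and> z < q \<and> z = (k * y) mod q"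
  unfolding line_zy_def mem_span2_iff lincomb_eq
  by (rule iffI, force simp: mod_simps mult.commute add.commute,
      (rule exI[of _ y], rule exI[of _ x]), simp add: mod_simps mult.commute add.commute)

lemma mem_line_yxz: "(x, y, z) \<in> line_yxz k \<longleftrightarrow> x < q \<and> y < q \<and> z < q \<and> y = (k * x + z) mod q"
  unfolding line_yxz_def mem_span2_iff lincomb_eq
  by (rule iffI, force simp: mod_simps mult.commute add.commute,
      (rule exI[of _ x], rule exI[of _ z]), simp add: mod_simps mult.commute add.commute)

lemma mem_line_zxy: "(x, y, z) \<in> line_zxy k \<longleftrightarrow> x < q \<and> y < q \<and> z < q \<and> z = (k * x + y) mod q"
  unfolding line_zxy_def mem_span2_iff lincomb_eq
  by (rule iffI, force simp: mod_simps mult.commute add.commute,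
      (rule exI[of _ x], rule exI[of _ y]), simp add: mod_simps mult.commute add.commute)

lemma mem_line_x0: "(x, y, z) \<in> line_x0 \<longleftrightarrow> x < q \<and> y < q \<and> z < q \<and> x = 0"
  unfolding line_x0_def mem_span2_iff lincomb_eq
  by (rule iffI, force simp: mod_simps mult.commute add.commute,
      (rule exI[of _ y], rule exI[of _ z]), simp add: mod_simps mult.commute add.commute)

lemma mem_line_xyz: "(x, y, z) \<in> line_xyz \<longleftrightarrow> x < q \<and> y < q \<and> z < q \<and> x = (y + z) mod q"
  unfolding line_xyz_def mem_span2_iff lincomb_eq
  by (rule iffI, force simp: mod_simps mult.commute add.commute,
      (rule exI[of _ y], rule exI[of _ z]), simp add: mod_simps mult.commute add.commute)

lemma explicit_lines_in_lines:
  assumes "k < q"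
  shows "line_yx k \<in> lines q" "line_zx k \<in> lines q" "line_zy k \<in> lines q"
    "line_yxz k \<in> lines q" "line_zxy k \<in> lines q"
  unfolding line_yx_def line_zx_def line_zy_def line_yxz_def line_zxy_def
  using assms one_less_q by (intro span2_in_lines lin_indepI; auto simp: lincomb_eq)+

lemma line_x0_in_lines: "line_x0 \<in> lines q"
  and line_xyz_in_lines: "line_xyz \<in> lines q"
  unfolding line_x0_def line_xyz_def
  using one_less_q by (intro span2_in_lines lin_indepI; auto simp: lincomb_eq)+

lemma span1_neq_by_zero_coordinate:
  assumes "x < q" "y < q" "z < q"
  shows "x \<noteq> 0 \<Longrightarrow> span1 q (x, y, z) \<noteq> span1 q (0, y', z')"
    and "y \<noteq> 0 \<Longrightarrow> span1 q (x, y, z) \<noteq> span1 q (x', 0, z')"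
    and "z \<noteq> 0 \<Longrightarrow> span1 q (x, y, z) \<noteq> span1 q (x', y', 0)"
proof -
  have "(x, y, z) \<in> span1 q (x, y, z)" using span1_self assms by simp
  then show "x \<noteq> 0 \<Longrightarrow> span1 q (x, y, z) \<noteq> span1 q (0, y', z')"
    and "y \<noteq> 0 \<Longrightarrow> span1 q (x, y, z) \<noteq> span1 q (x', 0, z')"
    and "z \<noteq> 0 \<Longrightarrow> span1 q (x, y, z) \<noteq> span1 q (x', y', 0)"
    by (auto simp: span1_def[of q "(0, _, _)"] span1_def[of q "(_, 0, _)"]
        span1_def[of q "(_, _, 0)"])
qed

lemma e_points: "e1 \<in> points q" "e2 \<in> points q" "e3 \<in> points q"
  using one_less_q by (simp_all add: span1_in_points)

lemma e1_neq_e2: "e1 \<noteq> e2"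
  using one_less_q span1_neq_by_zero_coordinate(1)[of 1 0 0 1 0] by simp

lemma exists_mod_inverse:
  assumes "0 < a" "a < q"
  obtains k where "k < q" "(k * a) mod q = 1"
proof -
  let ?S = "(\<lambda>x. (x, 0::nat, 0::nat)) ` {..<q}"
  have "span1 q (a, 0, 0) \<subseteq> ?S" unfolding span1_def using q_pos by auto
  moreover have "card (span1 q (a, 0, 0)) = card ?S"
    using card_span1[of "(a, 0, 0)"] assms by (simp add: card_image inj_on_def)
  ultimately have "span1 q (a, 0, 0) = ?S" by (simp add: card_subset_eq)
  moreover have "(1, 0, 0) \<in> ?S" using one_less_q by auto
  ultimately have "(1, 0, 0) \<in> span1 q (a, 0, 0)" by simp
  then obtain k where "k < q" "(1, 0, 0) = smul q k (a, 0, 0)" unfolding span1_def by blast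
  then show ?thesis using that by simp
qed

lemma points_normal_form:
  assumes "p \<in> points q"
  shows "(\<exists>b<q. \<exists>c<q. p = span1 q (1, b, c)) \<or> (\<exists>c<q. p = span1 q (0, 1, c)) \<or> p = span1 q (0, 0, 1)"
proof -
  obtain a b c where v: "(a, b, c) \<in> Vq q" "(a, b, c) \<noteq> zero3" "p = span1 q (a, b, c)"
    using assms unfolding mem_points_iff by auto
  have scale: "p = span1 q (smul q k (a, b, c))" if "smul q k (a, b, c) \<noteq> zero3" for k
    using span1_eq[OF smul_in_span1 that v(1)] v(3) by simp
  consider "a \<noteq> 0" | "a = 0" "b \<noteq> 0" | "a = 0" "b = 0" "c \<noteq> 0" using v(2) by auto
  then show ?thesis
  proof cases
    case 1
    then obtain k where "(k * a) mod q = 1" using exists_mod_inverse v(1) by (metis mem_Vq_iff not_gr0)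
    then have "p = span1 q (1, (k * b) mod q, (k * c) mod q)" using scale[of k] by simp
    then show ?thesis using mod_less_divisor[OF q_pos] by blast
  next
    case 2
    then obtain k where "(k * b) mod q = 1" using exists_mod_inverse v(1) by (metis mem_Vq_iff not_gr0)
    then have "p = span1 q (0, 1, (k * c) mod q)" using scale[of k] 2 by simp
    then show ?thesis using mod_less_divisor[OF q_pos] by blast
  next
    case 3
    then obtain k where "(k * c) mod q = 1" using exists_mod_inverse v(1) by (metis mem_Vq_iff not_gr0)
    then show ?thesis using scale[of k] 3 by auto
  qed
qed

declare One_nat_def [simp del] \<comment> \<open>keep the coordinate \<open>1\<close> in the form used by the fixed-point facts\<close>

lemmas incidence_simps = span1_subset_line_iff explicit_lines_in_lines line_x0_in_lines
  line_xyz_in_lines span1_in_points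
  mem_line_yx mem_line_zx mem_line_zy mem_line_yxz mem_line_zxy mem_line_x0 mem_line_xyz
  span1_neq_by_zero_coordinate

end

locale collineation = prime_plane +
  fixes g :: "vec3 set \<Rightarrow> vec3 set" and h :: "vec3 set \<Rightarrow> vec3 set"
  assumes points_closed: "p \<in> points q \<Longrightarrow> g p \<in> points q"
    and lines_closed: "l \<in> lines q \<Longrightarrow> h l \<in> lines q"
    and incidence: "p \<in> points q \<Longrightarrow> l \<in> lines q \<Longrightarrow> p \<subseteq> l \<longleftrightarrow> g p \<subseteq> h l"
begin

lemma fixed_line_through_fixed_points:
  assumes "p1 \<in> points q" "p2 \<in> points q" "p1 \<noteq> p2" "g p1 = p1" "g p2 = p2" "l \<in> lines q"
    "p1 \<subseteq> l" "p2 \<subseteq> l"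
  shows "h l = l"
  using line_through_two_points_unique[of p1 p2 "h l" l] assms incidence lines_closed by metis

lemma fixed_point_on_fixed_lines:
  assumes "l1 \<in> lines q" "l2 \<in> lines q" "l1 \<noteq> l2" "h l1 = l1" "h l2 = l2" "p \<in> points q"
    "p \<subseteq> l1" "p \<subseteq> l2"
  shows "g p = p"
proof (rule ccontr)
  assume "g p \<noteq> p"
  moreover have "g p \<subseteq> l1" "g p \<subseteq> l2" using assms incidence by metis+
  ultimately have "l1 = l2"
    using line_through_two_points_unique[of p "g p" l1 l2] assms points_closed by metis
  then show False using assms(3) by simp
qed

lemma lines_inj:
  assumes "l \<in> lines q" "l' \<in> lines q" "h l = h l'"
  shows "l = l'"
proof (rule ccontr)
  assume "l \<noteq> l'"
  then obtain p where p: "p \<in> points q" "p \<subseteq> l" "\<not> p \<subseteq> l'"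
    by (meson point_on_avoiding assms(1,2))
  then show False using incidence[OF p(1) assms(1)] incidence[OF p(1) assms(2)] assms(3) by simp
qed

lemma fixed_lines_if_fixed_points:
  assumes fixed: "\<And>p. p \<in> points q \<Longrightarrow> g p = p" and l: "l \<in> lines q"
  shows "h l = l"
proof -
  obtain u w where uw: "u \<in> Vq q" "w \<in> Vq q" "u \<noteq> zero3" "w \<noteq> zero3" "span1 q u \<noteq> span1 q w"
    "span1 q u \<subseteq> l" "span1 q w \<subseteq> l"
    using line_has_two_points[OF l] by blast
  have P: "span1 q u \<in> points q" "span1 q w \<in> points q" using span1_in_points uw by simp_all
  show ?thesis by (rule fixed_line_through_fixed_points[OF P uw(5)]) (use fixed P l uw in simp_all)
qed

end

text \<open>Each step of the proofs below either joins two fixed points (so the joining line is fixed)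
  or meets two fixed lines (so the meeting point is fixed).\<close>

locale frame_fixing_collineation = collineation +
  assumes fixes_e1: "g e1 = e1" and fixes_e2: "g e2 = e2" and fixes_e3: "g e3 = e3"
    and fixes_line_xyz: "h line_xyz = line_xyz"
begin

lemmas join = fixed_line_through_fixed_points
lemmas meet = fixed_point_on_fixed_lines

lemma fixes_unit_configuration:
  shows "h (line_yx 0) = line_yx 0" "h (line_zx 0) = line_zx 0" "h line_x0 = line_x0"
    and "h (line_yx 1) = line_yx 1" "h (line_zx 1) = line_zx 1"
    and "g (span1 q (0, 1, 1)) = span1 q (0, 1, 1)"
proof -
  note simps = incidence_simps one_less_q q_pos fixes_e1 fixes_e2 fixes_e3 fixes_line_xyz
  show hY: "h (line_yx 0) = line_yx 0"
    by (rule join[of "span1 q (1, 0, 0)" "span1 q (0, 0, 1)"]) (simp_all add: simps)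
  show hZ: "h (line_zx 0) = line_zx 0"
    by (rule join[of "span1 q (1, 0, 0)" "span1 q (0, 1, 0)"]) (simp_all add: simps)
  show hX: "h line_x0 = line_x0"
    by (rule join[of "span1 q (0, 1, 0)" "span1 q (0, 0, 1)"]) (simp_all add: simps)
  have gR: "g (span1 q (1, 1, 0)) = span1 q (1, 1, 0)"
    by (rule meet[of "line_zx 0" line_xyz]) (simp_all add: simps hZ neq_by_witness[of "(1, 0, 0)"])
  have gS: "g (span1 q (1, 0, 1)) = span1 q (1, 0, 1)"
    by (rule meet[of "line_yx 0" line_xyz]) (simp_all add: simps hY neq_by_witness[of "(1, 0, 0)"])
  show hY1: "h (line_yx 1) = line_yx 1"
    by (rule join[of "span1 q (0, 0, 1)" "span1 q (1, 1, 0)"]) (simp_all add: simps gR)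
  show hZ1: "h (line_zx 1) = line_zx 1"
    by (rule join[of "span1 q (1, 0, 1)" "span1 q (0, 1, 0)"]) (simp_all add: simps gS)
  have gU: "g (span1 q (1, 1, 1)) = span1 q (1, 1, 1)"
    by (rule meet[of "line_yx 1" "line_zx 1"]) (simp_all add: simps hY1 hZ1 neq_by_witness[of "(0, 0, 1)"])
  have "h (line_zy 1) = line_zy 1"
    by (rule join[of "span1 q (1, 1, 1)" "span1 q (1, 0, 0)"]) (simp_all add: simps gU)
  then show "g (span1 q (0, 1, 1)) = span1 q (0, 1, 1)"
    by (intro meet[of "line_zy 1" line_x0]) (simp_all add: simps hX neq_by_witness[of "(1, 0, 0)"])
qed

lemma fixes_points_1k0: "k < q \<Longrightarrow> g (span1 q (1, k, 0)) = span1 q (1, k, 0)"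
proof (induction k)
  case 0
  then show ?case using fixes_e1 by simp
next
  case (Suc k)
  note simps = incidence_simps one_less_q fixes_e3 fixes_unit_configuration
  have k: "k < q" "Suc k < q" using Suc.prems by auto
  have "h (line_yxz k) = line_yxz k"
    by (rule join[of "span1 q (0, 1, 1)" "span1 q (1, k, 0)"]) (use k Suc.IH in \<open>simp_all add: simps\<close>)
  then have "g (span1 q (1, Suc k, 1)) = span1 q (1, Suc k, 1)"
    by (intro meet[of "line_zx 1" "line_yxz k"])
      (use k in \<open>simp_all add: simps neq_by_witness[of "(0, 1, 0)"]\<close>)
  then have "h (line_yx (Suc k)) = line_yx (Suc k)"
    by (intro join[of "span1 q (1, Suc k, 1)" "span1 q (0, 0, 1)"]) (use k in \<open>simp_all add: simps\<close>)
  then show ?case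
    by (intro meet[of "line_yx (Suc k)" "line_zx 0"])
      (use k in \<open>simp_all add: simps neq_by_witness[of "(0, 0, 1)"]\<close>)
qed

lemma fixes_points_10c: "c < q \<Longrightarrow> g (span1 q (1, 0, c)) = span1 q (1, 0, c)"
proof (induction c)
  case 0
  then show ?case using fixes_e1 by simp
next
  case (Suc c)
  note simps = incidence_simps one_less_q fixes_e2 fixes_unit_configuration
  have c: "c < q" "Suc c < q" using Suc.prems by auto
  have "h (line_zxy c) = line_zxy c"
    by (rule join[of "span1 q (0, 1, 1)" "span1 q (1, 0, c)"]) (use c Suc.IH in \<open>simp_all add: simps\<close>)
  then have "g (span1 q (1, 1, Suc c)) = span1 q (1, 1, Suc c)"
    by (intro meet[of "line_yx 1" "line_zxy c"])
      (use c in \<open>simp_all add: simps neq_by_witness[of "(0, 0, 1)"]\<close>)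
  then have "h (line_zx (Suc c)) = line_zx (Suc c)"
    by (intro join[of "span1 q (1, 1, Suc c)" "span1 q (0, 1, 0)"]) (use c in \<open>simp_all add: simps\<close>)
  then show ?case
    by (intro meet[of "line_zx (Suc c)" "line_yx 0"])
      (use c in \<open>simp_all add: simps neq_by_witness[of "(0, 1, 0)"]\<close>)
qed

lemma fixes_points_1bc:
  assumes "b < q" "c < q"
  shows "g (span1 q (1, b, c)) = span1 q (1, b, c)"
proof -
  note simps = incidence_simps one_less_q q_pos fixes_e2 fixes_e3 fixes_points_1k0 fixes_points_10c assms
  have "h (line_yx b) = line_yx b"
    by (rule join[of "span1 q (1, b, 0)" "span1 q (0, 0, 1)"]) (simp_all add: simps)
  moreover have "h (line_zx c) = line_zx c"
    by (rule join[of "span1 q (1, 0, c)" "span1 q (0, 1, 0)"]) (simp_all add: simps)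
  ultimately show ?thesis
    by (intro meet[of "line_yx b" "line_zx c"]) (simp_all add: simps neq_by_witness[of "(0, 0, 1)"])
qed

lemma fixes_points_01c:
  assumes "c < q"
  shows "g (span1 q (0, 1, c)) = span1 q (0, 1, c)"
proof -
  note simps = incidence_simps one_less_q q_pos fixes_e1 fixes_points_1bc fixes_unit_configuration assms
  have "h (line_zy c) = line_zy c"
    by (rule join[of "span1 q (1, 1, c)" "span1 q (1, 0, 0)"]) (simp_all add: simps)
  then show ?thesis
    by (intro meet[of "line_zy c" line_x0]) (simp_all add: simps neq_by_witness[of "(1, 0, 0)"])
qed

theorem fixes_all_points: "p \<in> points q \<Longrightarrow> g p = p"
  using points_normal_form fixes_points_1bc fixes_points_01c fixes_e3 by blast

end

section \<open>Twins and the graph \<open>LG\<^sub>q \<otimes> K\<^sub>r\<^sub>,\<^sub>s\<close>\<close>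

definition twins :: "'v set \<Rightarrow> ('v \<Rightarrow> 'v \<Rightarrow> bool) \<Rightarrow> 'v \<Rightarrow> 'v \<Rightarrow> bool" where
  "twins V E u v \<longleftrightarrow> (\<forall>w\<in>V. E u w = E v w)"

lemma graph_aut_twins:
  assumes f: "graph_aut V E f" and "u \<in> V" "u' \<in> V" "twins V E u u'"
  shows "twins V E (f u) (f u')"
  unfolding twins_def
proof
  fix w assume "w \<in> V"
  then have "w \<in> f ` V" using f unfolding graph_aut_def bij_betw_def by simp
  then obtain w0 where w0: "w0 \<in> V" "w = f w0" by blast
  have "E (f u) w = E u w0" using f assms(2) w0 unfolding graph_aut_def by simp
  also have "\<dots> = E u' w0" using assms(4) w0(1) unfolding twins_def by simp
  also have "\<dots> = E (f u') w" using f assms(3) w0 unfolding graph_aut_def by simp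
  finally show "E (f u) w = E (f u') w" .
qed

text \<open>The transposition of two equally coloured twins is a colour-preserving automorphism.\<close>

lemma distinguishing_twins_eq:
  assumes c: "distinguishing V E c" and uv: "u \<in> V" "v \<in> V" "c u = c v"
    and left: "\<forall>w\<in>V. E u w = E v w" and right: "\<forall>w\<in>V. E w u = E w v"
  shows "u = v"
proof -
  define \<sigma> where "\<sigma> x = (if x = u then v else if x = v then u else x)" for x
  have \<sigma>\<sigma>: "\<sigma> (\<sigma> x) = x" for x unfolding \<sigma>_def by auto
  have \<sigma>V: "x \<in> V \<Longrightarrow> \<sigma> x \<in> V" for x unfolding \<sigma>_def using uv by auto
  have first: "E (\<sigma> x) y = E x y" if "y \<in> V" for x y
    unfolding \<sigma>_def using left that by auto
  have second: "E x (\<sigma> y) = E x y" if "x \<in> V" for x y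
    unfolding \<sigma>_def using right that by auto
  have "bij_betw \<sigma> V V" by (rule bij_betw_byWitness[where f' = \<sigma>]) (auto simp: \<sigma>\<sigma> \<sigma>V)
  moreover have "E x y \<longleftrightarrow> E (\<sigma> x) (\<sigma> y)" if "x \<in> V" "y \<in> V" for x y
    using first[OF \<sigma>V[OF that(2)]] second[OF that(1)] by simp
  ultimately have "graph_aut V E \<sigma>" unfolding graph_aut_def by blast
  moreover have "\<forall>x\<in>V. c (\<sigma> x) = c x" unfolding \<sigma>_def using uv by auto
  ultimately have "\<sigma> u = u" using c uv(1) unfolding distinguishing_def by blast
  then show ?thesis unfolding \<sigma>_def by (auto split: if_splits)
qed

lemma LGK_adj_Inl: "LGK_adj (Inl (p, i)) w = (case w of Inr (l, j) \<Rightarrow> p \<subseteq> l | Inl _ \<Rightarrow> False)"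
  by (cases w) auto

lemma LGK_adj_Inr: "LGK_adj (Inr (l, j)) w = (case w of Inl (p, i) \<Rightarrow> p \<subseteq> l | Inr _ \<Rightarrow> False)"
  by (cases w) auto

locale lgk = prime_plane +
  fixes r s :: nat
  assumes r_pos: "0 < r" and s_pos: "0 < s"
begin

abbreviation V :: "lgvert set" where "V \<equiv> LGK_verts q r s"

lemma Inl_in_V_iff [simp]: "Inl (p, i) \<in> V \<longleftrightarrow> p \<in> points q \<and> i \<in> {1..r}"
  unfolding LGK_verts_def by auto

lemma Inr_in_V_iff [simp]: "Inr (l, j) \<in> V \<longleftrightarrow> l \<in> lines q \<and> j \<in> {1..s}"
  unfolding LGK_verts_def by auto

lemma V_cases:
  assumes "v \<in> V"
  obtains (point) p i where "v = Inl (p, i)" "p \<in> points q" "i \<in> {1..r}"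
    | (line) l j where "v = Inr (l, j)" "l \<in> lines q" "j \<in> {1..s}"
  using assms unfolding LGK_verts_def by auto

lemma copies_twins:
  shows "twins V LGK_adj (Inl (p, i)) (Inl (p, i'))" "twins V LGK_adj (Inr (l, j)) (Inr (l, j'))"
  unfolding twins_def by (simp_all add: LGK_adj_Inl LGK_adj_Inr)

lemma twins_point_copies:
  assumes "Inl (p, i) \<in> V" "Inl (p', i') \<in> V" "twins V LGK_adj (Inl (p, i)) (Inl (p', i'))"
  shows "p = p'"
proof (rule ccontr)
  assume "p \<noteq> p'"
  moreover have "p \<in> points q" "p' \<in> points q" using assms(1,2) by simp_all
  ultimately obtain l where l: "l \<in> lines q" "p \<subseteq> l" "\<not> p' \<subseteq> l"
    by (meson line_through_avoiding)
  then have "Inr (l, 1) \<in> V" using s_pos by simp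
  then have "LGK_adj (Inl (p, i)) (Inr (l, 1)) = LGK_adj (Inl (p', i')) (Inr (l, 1))"
    by (rule bspec[OF assms(3)[unfolded twins_def]])
  then show False using l by simp
qed

lemma twins_line_copies:
  assumes "Inr (l, j) \<in> V" "Inr (l', j') \<in> V" "twins V LGK_adj (Inr (l, j)) (Inr (l', j'))"
  shows "l = l'"
proof (rule ccontr)
  assume "l \<noteq> l'"
  moreover have "l \<in> lines q" "l' \<in> lines q" using assms(1,2) by simp_all
  ultimately obtain p where p: "p \<in> points q" "p \<subseteq> l" "\<not> p \<subseteq> l'"
    by (meson point_on_avoiding)
  then have "Inl (p, 1) \<in> V" using r_pos by simp
  then have "LGK_adj (Inr (l, j)) (Inl (p, 1)) = LGK_adj (Inr (l', j')) (Inl (p, 1))"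
    by (rule bspec[OF assms(3)[unfolded twins_def]])
  then show False using p by simp
qed

lemma not_twins_point_line:
  assumes "Inl (p, i) \<in> V"
  shows "\<not> twins V LGK_adj (Inl (p, i)) (Inr (l, j))"
proof
  assume t: "twins V LGK_adj (Inl (p, i)) (Inr (l, j))"
  have "p \<in> points q" using assms by simp
  then obtain l0 where l0: "l0 \<in> lines q" "p \<subseteq> l0" by (meson exists_line_through)
  then have "Inr (l0, 1) \<in> V" using s_pos by simp
  then have "LGK_adj (Inl (p, i)) (Inr (l0, 1)) = LGK_adj (Inr (l, j)) (Inr (l0, 1))"
    by (rule bspec[OF t[unfolded twins_def]])
  then show False using l0 by simp
qed

lemma copy_colours_inj:
  assumes "distinguishing V LGK_adj c"
  shows "p \<in> points q \<Longrightarrow> inj_on (\<lambda>i. c (Inl (p, i))) {1..r}"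
    and "l \<in> lines q \<Longrightarrow> inj_on (\<lambda>j. c (Inr (l, j))) {1..s}"
proof -
  have adj: "LGK_adj (Inl (p, i)) w = LGK_adj (Inl (p, i')) w"
    "LGK_adj w (Inl (p, i)) = LGK_adj w (Inl (p, i'))"
    "LGK_adj (Inr (l, j)) w = LGK_adj (Inr (l, j')) w"
    "LGK_adj w (Inr (l, j)) = LGK_adj w (Inr (l, j'))" for p i i' l j j' w
    by (cases w; auto)+
  show "p \<in> points q \<Longrightarrow> inj_on (\<lambda>i. c (Inl (p, i))) {1..r}"
    using distinguishing_twins_eq[OF assms, of "Inl (p, _)" "Inl (p, _)"] adj
    unfolding inj_on_def by simp
  show "l \<in> lines q \<Longrightarrow> inj_on (\<lambda>j. c (Inr (l, j))) {1..s}"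
    using distinguishing_twins_eq[OF assms, of "Inr (l, _)" "Inr (l, _)"] adj
    unfolding inj_on_def by simp
qed

end

section \<open>The lower bound\<close>

definition swap_xy :: "vec3 \<Rightarrow> vec3" where
  "swap_xy = (\<lambda>(a, b, c). (b, a, c))"

lemma swap_xy_simp [simp]: "swap_xy (a, b, c) = (b, a, c)"
  by (simp add: swap_xy_def)

lemma swap_xy_swap_xy [simp]: "swap_xy (swap_xy v) = v"
  by (cases v rule: prod_cases3) simp

lemma inj_swap_xy: "inj swap_xy"
  by (metis injI swap_xy_swap_xy)

lemma swap_xy_smul: "swap_xy (smul q k v) = smul q k (swap_xy v)"
  by (cases v rule: prod_cases3) simp

lemma swap_xy_vadd: "swap_xy (vadd q u w) = vadd q (swap_xy u) (swap_xy w)"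
  by (cases u rule: prod_cases3, cases w rule: prod_cases3) simp

context prime_plane
begin

lemma swap_xy_Vq: "swap_xy v \<in> Vq q \<longleftrightarrow> v \<in> Vq q"
  by (cases v rule: prod_cases3) auto

lemma swap_xy_span1: "swap_xy ` span1 q v = span1 q (swap_xy v)"
  by (simp add: span1_eq_image image_image swap_xy_smul)

lemma swap_xy_span2: "swap_xy ` span2 q u w = span2 q (swap_xy u) (swap_xy w)"
  unfolding span2_eq_image image_image by (simp add: swap_xy_vadd swap_xy_smul split_def)

lemma swap_xy_eq_zero3_iff: "swap_xy v = zero3 \<longleftrightarrow> v = zero3"
  by (cases v rule: prod_cases3) auto

lemma swap_xy_points:
  assumes "p \<in> points q"
  shows "swap_xy ` p \<in> points q"
proof -
  obtain v where "v \<in> Vq q" "v \<noteq> zero3" "p = span1 q v" using assms unfolding mem_points_iff by auto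
  then show ?thesis
    using span1_in_points[of "swap_xy v"] by (simp add: swap_xy_span1 swap_xy_Vq swap_xy_eq_zero3_iff)
qed

lemma swap_xy_lines:
  assumes "l \<in> lines q"
  shows "swap_xy ` l \<in> lines q"
proof -
  obtain u w where uw: "u \<in> Vq q" "w \<in> Vq q" "lin_indep q u w" "l = span2 q u w"
    using assms unfolding mem_lines_iff by auto
  have "lc (swap_xy u) (swap_xy w) a b = swap_xy (lc u w a b)" for a b
    by (simp add: swap_xy_vadd swap_xy_smul)
  then have "lin_indep q (swap_xy u) (swap_xy w)"
    using uw(3) unfolding lin_indep_def by (simp add: swap_xy_eq_zero3_iff)
  then show ?thesis
    using span2_in_lines uw by (simp add: swap_xy_span2 swap_xy_Vq)
qed

end

locale small_distinguishing_colouring = lgk +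
  fixes c :: "lgvert \<Rightarrow> nat" and k :: nat
  assumes colours: "c ` V \<subseteq> {..<k}" and proper: "proper_coloring V LGK_adj c"
    and distinguishing: "distinguishing V LGK_adj c" and few_colours: "k \<le> r + s"
begin

lemma colour_less: "v \<in> V \<Longrightarrow> c v < k"
  using colours by auto

definition point_colours :: "vec3 set \<Rightarrow> nat set" where
  "point_colours p = (\<lambda>i. c (Inl (p, i))) ` {1..r}"

definition line_colours :: "vec3 set \<Rightarrow> nat set" where
  "line_colours l = (\<lambda>j. c (Inr (l, j))) ` {1..s}"

lemma card_point_colours: "p \<in> points q \<Longrightarrow> card (point_colours p) = r"
  unfolding point_colours_def using copy_colours_inj(1)[OF distinguishing] by (simp add: card_image)

lemma card_line_colours: "l \<in> lines q \<Longrightarrow> card (line_colours l) = s"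
  unfolding line_colours_def using copy_colours_inj(2)[OF distinguishing] by (simp add: card_image)

text \<open>An incident point and line carry disjoint colour sets of sizes \<open>r\<close> and \<open>s\<close>,
  so with at most \<open>r + s\<close> colours each determines the other.\<close>

lemma point_colours_eq_compl:
  assumes "p \<in> points q" "l \<in> lines q" "p \<subseteq> l"
  shows "point_colours p = {..<k} - line_colours l"
proof -
  have disjoint: "point_colours p \<inter> line_colours l = {}"
    using proper assms unfolding proper_coloring_def point_colours_def line_colours_def by fastforce
  have "point_colours p \<union> line_colours l \<subseteq> {..<k}"
    using colour_less assms unfolding point_colours_def line_colours_def by auto
  moreover have "card (point_colours p \<union> line_colours l) = r + s"
    using disjoint card_point_colours[OF assms(1)] card_line_colours[OF assms(2)]
    by (simp add: card_Un_disjoint point_colours_def line_colours_def)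
  ultimately have "point_colours p \<union> line_colours l = {..<k}"
    using few_colours by (metis card_lessThan card_mono card_subset_eq finite_lessThan le_antisym)
  then show ?thesis using disjoint by blast
qed

lemma point_colours_const:
  assumes "p \<in> points q" "p' \<in> points q"
  shows "point_colours p = point_colours p'"
proof -
  obtain l where "l \<in> lines q" "p \<subseteq> l" "p' \<subseteq> l"
    by (meson exists_line_through_two_points assms)
  then show ?thesis using point_colours_eq_compl assms by metis
qed

lemma line_colours_const:
  assumes "l \<in> lines q" "l' \<in> lines q"
  shows "line_colours l = line_colours l'"
proof -
  have "line_colours l = {..<k} - point_colours e1" if l: "l \<in> lines q" for l
  proof -
    obtain u w where u: "u \<in> Vq q" "w \<in> Vq q" "u \<noteq> zero3" "w \<noteq> zero3"
      "span1 q u \<noteq> span1 q w" "span1 q u \<subseteq> l" "span1 q w \<subseteq> l"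
      by (rule line_has_two_points[OF l])
    have "span1 q u \<in> points q" "e1 \<in> points q"
      using u e_points by (simp_all add: span1_in_points)
    then have "point_colours (span1 q u) = point_colours e1" by (rule point_colours_const)
    moreover have "line_colours l \<subseteq> {..<k}"
      using colour_less l unfolding line_colours_def by auto
    ultimately show ?thesis
      using point_colours_eq_compl[OF \<open>span1 q u \<in> points q\<close> l u(6)] by auto
  qed
  then show ?thesis using assms by simp
qed

text \<open>With few colours, the collineation \<open>(x, y, z) \<mapsto> (y, x, z)\<close> lifts to a non-trivial
  colour-preserving automorphism: send each copy of a point or line to the copy of its image
  that has the same colour.\<close>

definition matching_point_copy :: "vec3 set \<Rightarrow> nat \<Rightarrow> nat" where
  "matching_point_copy p i = inv_into {1..r} (\<lambda>i'. c (Inl (swap_xy ` p, i'))) (c (Inl (p, i)))"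

definition matching_line_copy :: "vec3 set \<Rightarrow> nat \<Rightarrow> nat" where
  "matching_line_copy l j = inv_into {1..s} (\<lambda>j'. c (Inr (swap_xy ` l, j'))) (c (Inr (l, j)))"

definition swap_lift :: "lgvert \<Rightarrow> lgvert" where
  "swap_lift v = (case v of
      Inl (p, i) \<Rightarrow> Inl (swap_xy ` p, matching_point_copy p i)
    | Inr (l, j) \<Rightarrow> Inr (swap_xy ` l, matching_line_copy l j))"

lemma matching_point_copy:
  assumes "p \<in> points q" "i \<in> {1..r}"
  shows "matching_point_copy p i \<in> {1..r}"
    and "c (Inl (swap_xy ` p, matching_point_copy p i)) = c (Inl (p, i))"
    and "matching_point_copy (swap_xy ` p) (matching_point_copy p i) = i"
proof -
  have "c (Inl (p, i)) \<in> point_colours p" unfolding point_colours_def using assms by blast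
  also have "point_colours p = point_colours (swap_xy ` p)"
    using point_colours_const assms(1) swap_xy_points by blast
  finally have m: "c (Inl (p, i)) \<in> (\<lambda>i'. c (Inl (swap_xy ` p, i'))) ` {1..r}"
    unfolding point_colours_def .
  show i: "matching_point_copy p i \<in> {1..r}"
    unfolding matching_point_copy_def using inv_into_into[OF m] .
  show c: "c (Inl (swap_xy ` p, matching_point_copy p i)) = c (Inl (p, i))"
    unfolding matching_point_copy_def using f_inv_into_f[OF m] .
  show "matching_point_copy (swap_xy ` p) (matching_point_copy p i) = i"
    unfolding matching_point_copy_def[of "swap_xy ` p"]
    using c inv_into_f_f[OF copy_colours_inj(1)[OF distinguishing assms(1)] assms(2)]
    by (simp add: image_image matching_point_copy_def)
qed

lemma matching_line_copy:
  assumes "l \<in> lines q" "j \<in> {1..s}"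
  shows "matching_line_copy l j \<in> {1..s}"
    and "c (Inr (swap_xy ` l, matching_line_copy l j)) = c (Inr (l, j))"
    and "matching_line_copy (swap_xy ` l) (matching_line_copy l j) = j"
proof -
  have "c (Inr (l, j)) \<in> line_colours l" unfolding line_colours_def using assms by blast
  also have "line_colours l = line_colours (swap_xy ` l)"
    using line_colours_const assms(1) swap_xy_lines by blast
  finally have m: "c (Inr (l, j)) \<in> (\<lambda>j'. c (Inr (swap_xy ` l, j'))) ` {1..s}"
    unfolding line_colours_def .
  show j: "matching_line_copy l j \<in> {1..s}"
    unfolding matching_line_copy_def using inv_into_into[OF m] .
  show c: "c (Inr (swap_xy ` l, matching_line_copy l j)) = c (Inr (l, j))"
    unfolding matching_line_copy_def using f_inv_into_f[OF m] .
  show "matching_line_copy (swap_xy ` l) (matching_line_copy l j) = j"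
    unfolding matching_line_copy_def[of "swap_xy ` l"]
    using c inv_into_f_f[OF copy_colours_inj(2)[OF distinguishing assms(1)] assms(2)]
    by (simp add: image_image matching_line_copy_def)
qed

lemma swap_lift_props:
  assumes "v \<in> V"
  shows "swap_lift v \<in> V \<and> swap_lift (swap_lift v) = v \<and> c (swap_lift v) = c v"
  using assms
proof (cases rule: V_cases)
  case (point p i)
  then show ?thesis using matching_point_copy[OF point(2,3)] swap_xy_points[OF point(2)]
    by (simp add: swap_lift_def image_image)
next
  case (line l j)
  then show ?thesis using matching_line_copy[OF line(2,3)] swap_xy_lines[OF line(2)]
    by (simp add: swap_lift_def image_image)
qed

lemma swap_lift_graph_aut: "graph_aut V LGK_adj swap_lift"
  unfolding graph_aut_def
proof (intro conjI ballI)
  show "bij_betw swap_lift V V"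
    by (rule bij_betw_byWitness[where f' = swap_lift]) (use swap_lift_props in auto)
  show "LGK_adj u v = LGK_adj (swap_lift u) (swap_lift v)" for u v
    unfolding swap_lift_def using inj_swap_xy
    by (cases u; cases v) (auto simp: inj_image_subset_iff)
qed

theorem small_distinguishing_colouring_impossible: False
proof -
  have "\<forall>v\<in>V. swap_lift v = v"
    using distinguishing swap_lift_graph_aut swap_lift_props unfolding distinguishing_def by blast
  moreover have "Inl (e1, 1) \<in> V" using r_pos e_points by simp
  ultimately have "swap_lift (Inl (e1, 1)) = Inl (e1, 1)" by blast
  then have "swap_xy ` e1 = e1" by (simp add: swap_lift_def)
  then show False using e1_neq_e2 by (simp add: swap_xy_span1)
qed

end

lemma (in lgk) distinguishing_colouring_needs_extra_colour:
  assumes "c ` V \<subseteq> {..<k}" "proper_coloring V LGK_adj c" "distinguishing V LGK_adj c"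
  shows "r + s < k"
proof (rule ccontr)
  assume "\<not> r + s < k"
  then interpret small_distinguishing_colouring q r s c k
    using assms by unfold_locales auto
  show False by (rule small_distinguishing_colouring_impossible)
qed

section \<open>The upper bound\<close>

text \<open>The extra colour \<open>r + s\<close> marks a frame: different copies of \<open>e1\<close> and \<open>e2\<close>, and of
  the line \<open>x = y + z\<close> and the two lines \<open>y = x\<close>, \<open>y = 2 x\<close> through \<open>e3\<close>. None of these
  lines passes through \<open>e1\<close> or \<open>e2\<close>, so the colouring is still proper.\<close>

locale lgk_colouring = lgk +
  assumes two_less_q: "2 < q" and two_le_r: "2 \<le> r" and two_le_s: "2 \<le> s"
begin

definition colouring :: "lgvert \<Rightarrow> nat" where
  "colouring v = (case v of
      Inl (p, i) \<Rightarrow> if p = e1 \<and> i = 1 \<or> p = e2 \<and> i = 2 then r + s else i - 1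
    | Inr (l, j) \<Rightarrow>
        if l = line_xyz \<and> j = 1 \<or> (l = line_yx 1 \<or> l = line_yx 2) \<and> j = 2 then r + s
        else r + j - 1)"

lemma colouring_Inl:
  "colouring (Inl (p, i)) = (if p = e1 \<and> i = 1 \<or> p = e2 \<and> i = 2 then r + s else i - 1)"
  by (simp add: colouring_def)

lemma colouring_Inr: "colouring (Inr (l, j)) =
    (if l = line_xyz \<and> j = 1 \<or> (l = line_yx 1 \<or> l = line_yx 2) \<and> j = 2 then r + s else r + j - 1)"
  by (simp add: colouring_def)

lemma marked_lines:
  "line_xyz \<in> lines q" "line_yx 1 \<in> lines q" "line_yx 2 \<in> lines q"
  "line_xyz \<noteq> line_yx 1" "line_xyz \<noteq> line_yx 2" "line_yx 1 \<noteq> line_yx 2"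
  using two_less_q
  by (simp_all add: incidence_simps neq_by_witness[of "(1, 1, 0)"] neq_by_witness[of "(1, 0, 1)"])

lemma e1_e2_off_marked_lines:
  "\<not> e1 \<subseteq> line_xyz" "\<not> e1 \<subseteq> line_yx 1" "\<not> e1 \<subseteq> line_yx 2"
  "\<not> e2 \<subseteq> line_xyz" "\<not> e2 \<subseteq> line_yx 1" "\<not> e2 \<subseteq> line_yx 2"
  using two_less_q by (simp_all add: incidence_simps)

lemma e3_on_marked_lines: "e3 \<subseteq> line_yx 1" "e3 \<subseteq> line_yx 2"
  using two_less_q by (simp_all add: incidence_simps)

lemma colouring_point_cases:
  assumes "Inl (p, i) \<in> V"
  shows "colouring (Inl (p, i)) < r \<or> colouring (Inl (p, i)) = r + s"
  using assms by (auto simp: colouring_Inl)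

lemma colouring_line_cases:
  assumes "Inr (l, j) \<in> V"
  shows "r \<le> colouring (Inr (l, j)) \<and> colouring (Inr (l, j)) < r + s
    \<or> colouring (Inr (l, j)) = r + s"
  using assms by (auto simp: colouring_Inr)

lemma extra_colour_points:
  assumes "Inl (p, i) \<in> V" "colouring (Inl (p, i)) = r + s"
  shows "p = e1 \<and> i = 1 \<or> p = e2 \<and> i = 2"
  using assms s_pos by (auto simp: colouring_Inl split: if_splits)

lemma extra_colour_lines:
  assumes "Inr (l, j) \<in> V" "colouring (Inr (l, j)) = r + s"
  shows "l = line_xyz \<and> j = 1 \<or> (l = line_yx 1 \<or> l = line_yx 2) \<and> j = 2"
  using assms by (auto simp: colouring_Inr split: if_splits)

lemma colouring_less:
  assumes "v \<in> V"
  shows "colouring v < r + s + 1"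
  using assms
proof (cases rule: V_cases)
  case (point p i)
  then show ?thesis using colouring_point_cases[of p i] assms by auto
next
  case (line l j)
  then show ?thesis using colouring_line_cases[of l j] assms by auto
qed

lemma low_colour_point:
  assumes "v \<in> V" "colouring v < r"
  obtains p i where "v = Inl (p, i)"
  using assms(1)
proof (cases rule: V_cases)
  case (line l j)
  then show ?thesis using colouring_line_cases[of l j] assms by auto
qed

lemma middle_colour_line:
  assumes "v \<in> V" "r \<le> colouring v" "colouring v < r + s"
  obtains l j where "v = Inr (l, j)"
  using assms(1)
proof (cases rule: V_cases)
  case (point p i)
  then show ?thesis using colouring_point_cases[of p i] assms by auto
qed

lemma colouring_copies_inj:
  shows "Inl (p, i) \<in> V \<Longrightarrow> Inl (p, i') \<in> V \<Longrightarrow> colouring (Inl (p, i)) = colouring (Inl (p, i'))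
      \<Longrightarrow> i = i'"
    and "Inr (l, j) \<in> V \<Longrightarrow> Inr (l, j') \<in> V \<Longrightarrow> colouring (Inr (l, j)) = colouring (Inr (l, j'))
      \<Longrightarrow> j = j'"
  using e1_neq_e2 marked_lines two_le_r two_le_s
  by (auto simp: colouring_Inl colouring_Inr split: if_splits)

lemma proper_colouring: "proper_coloring V LGK_adj colouring"
proof -
  have key: "colouring (Inl (p, i)) \<noteq> colouring (Inr (l, j))"
    if "Inl (p, i) \<in> V" "Inr (l, j) \<in> V" "p \<subseteq> l" for p i l j
  proof
    assume eq: "colouring (Inl (p, i)) = colouring (Inr (l, j))"
    then have extra: "colouring (Inl (p, i)) = r + s"
      using colouring_point_cases[OF that(1)] colouring_line_cases[OF that(2)] by linarith
    then have "p = e1 \<or> p = e2" using extra_colour_points[OF that(1)] by blast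
    moreover have "l = line_xyz \<or> l = line_yx 1 \<or> l = line_yx 2"
      using extra_colour_lines[OF that(2)] eq extra by auto
    ultimately show False using e1_e2_off_marked_lines that(3) by auto
  qed
  show ?thesis unfolding proper_coloring_def
  proof (intro ballI impI)
    fix u v assume uv: "u \<in> V" "v \<in> V" "LGK_adj u v"
    then consider (point_line) p i l j where "u = Inl (p, i)" "v = Inr (l, j)" "p \<subseteq> l"
      | (line_point) l j p i where "u = Inr (l, j)" "v = Inl (p, i)" "p \<subseteq> l"
      by (cases u; cases v) auto
    then show "colouring u \<noteq> colouring v"
      by cases (use key uv in \<open>simp_all add: eq_commute[of "colouring (Inr _)"]\<close>)
  qed
qed

end

locale colour_preserving_automorphism = lgk_colouring +
  fixes f :: "lgvert \<Rightarrow> lgvert"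
  assumes aut: "graph_aut V LGK_adj f" and preserves: "\<forall>v\<in>V. colouring (f v) = colouring v"
begin

lemma f_in_V: "v \<in> V \<Longrightarrow> f v \<in> V"
  using aut unfolding graph_aut_def by (meson bij_betw_apply)

lemma f_adj: "u \<in> V \<Longrightarrow> v \<in> V \<Longrightarrow> LGK_adj (f u) (f v) = LGK_adj u v"
  using aut unfolding graph_aut_def by simp

lemma f_colour: "v \<in> V \<Longrightarrow> colouring (f v) = colouring v"
  using preserves by blast

text \<open>Some copy of a point (of a line) has a colour below \<open>r\<close> (between \<open>r\<close> and \<open>r + s\<close>),
  so its image is a point (a line); the other copies are its twins, and no line is a twin of
  a point.\<close>

lemma f_point:
  assumes "Inl (p, i) \<in> V"
  obtains p' i' where "f (Inl (p, i)) = Inl (p', i')"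
proof -
  define i0 where "i0 = (if p = e1 then 2 else (1::nat))"
  have v0: "Inl (p, i0) \<in> V" using assms two_le_r unfolding i0_def by simp
  have "colouring (Inl (p, i0)) < r"
    using e1_neq_e2 two_le_r unfolding i0_def colouring_Inl by auto
  then obtain p1 i1 where p1: "f (Inl (p, i0)) = Inl (p1, i1)"
    using low_colour_point f_in_V[OF v0] f_colour[OF v0] by metis
  have "twins V LGK_adj (f (Inl (p, i0))) (f (Inl (p, i)))"
    using graph_aut_twins[OF aut v0 assms copies_twins(1)] .
  moreover have "Inl (p1, i1) \<in> V" using f_in_V[OF v0] p1 by simp
  ultimately show ?thesis
    using that not_twins_point_line p1 by (cases "f (Inl (p, i))") auto
qed

lemma f_line:
  assumes "Inr (l, j) \<in> V"
  obtains l' j' where "f (Inr (l, j)) = Inr (l', j')"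
proof -
  define j0 where "j0 = (if l = line_xyz then 2 else (1::nat))"
  have v0: "Inr (l, j0) \<in> V" using assms two_le_s unfolding j0_def by simp
  have "r \<le> colouring (Inr (l, j0)) \<and> colouring (Inr (l, j0)) < r + s"
    using marked_lines two_le_s unfolding j0_def colouring_Inr by auto
  then obtain l1 j1 where l1: "f (Inr (l, j0)) = Inr (l1, j1)"
    using middle_colour_line f_in_V[OF v0] f_colour[OF v0] by metis
  have "twins V LGK_adj (f (Inr (l, j))) (f (Inr (l, j0)))"
    using graph_aut_twins[OF aut assms v0 copies_twins(2)] .
  moreover have "Inr (l1, j1) \<in> V" using f_in_V[OF v0] l1 by simp
  ultimately show ?thesis
    using that not_twins_point_line l1 f_in_V[OF assms] by (cases "f (Inr (l, j))") auto
qed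

definition point_image :: "vec3 set \<Rightarrow> vec3 set" where
  "point_image p = (case f (Inl (p, 1)) of Inl (p', _) \<Rightarrow> p' | Inr _ \<Rightarrow> {})"

definition line_image :: "vec3 set \<Rightarrow> vec3 set" where
  "line_image l = (case f (Inr (l, 1)) of Inr (l', _) \<Rightarrow> l' | Inl _ \<Rightarrow> {})"

lemma f_point_copy:
  assumes "Inl (p, i) \<in> V"
  obtains i' where "f (Inl (p, i)) = Inl (point_image p, i')" "Inl (point_image p, i') \<in> V"
    "colouring (Inl (point_image p, i')) = colouring (Inl (p, i))"
proof -
  have v1: "Inl (p, 1) \<in> V" using assms by simp
  obtain p1 i1 where e1: "f (Inl (p, i)) = Inl (p1, i1)" using f_point[OF assms] by blast
  obtain p2 i2 where e2: "f (Inl (p, 1)) = Inl (p2, i2)" using f_point[OF v1] by blast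
  have "twins V LGK_adj (Inl (p1, i1)) (Inl (p2, i2))"
    using graph_aut_twins[OF aut assms v1 copies_twins(1)] e1 e2 by simp
  then have "p1 = p2" using twins_point_copies f_in_V assms v1 e1 e2 by metis
  then show ?thesis
    using that e1 e2 f_in_V[OF assms] f_colour[OF assms] by (simp add: point_image_def)
qed

lemma f_line_copy:
  assumes "Inr (l, j) \<in> V"
  obtains j' where "f (Inr (l, j)) = Inr (line_image l, j')" "Inr (line_image l, j') \<in> V"
    "colouring (Inr (line_image l, j')) = colouring (Inr (l, j))"
proof -
  have v1: "Inr (l, 1) \<in> V" using assms by simp
  obtain l1 j1 where e1: "f (Inr (l, j)) = Inr (l1, j1)" using f_line[OF assms] by blast
  obtain l2 j2 where e2: "f (Inr (l, 1)) = Inr (l2, j2)" using f_line[OF v1] by blast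
  have "twins V LGK_adj (Inr (l1, j1)) (Inr (l2, j2))"
    using graph_aut_twins[OF aut assms v1 copies_twins(2)] e1 e2 by simp
  then have "l1 = l2" using twins_line_copies f_in_V assms v1 e1 e2 by metis
  then show ?thesis
    using that e1 e2 f_in_V[OF assms] f_colour[OF assms] by (simp add: line_image_def)
qed

lemma point_image_copy:
  assumes "p \<in> points q"
  obtains i' where "f (Inl (p, 1)) = Inl (point_image p, i')" "point_image p \<in> points q"
  using f_point_copy[of p 1] assms r_pos by auto

lemma line_image_copy:
  assumes "l \<in> lines q"
  obtains j' where "f (Inr (l, 1)) = Inr (line_image l, j')" "line_image l \<in> lines q"
  using f_line_copy[of l 1] assms s_pos by auto

lemma induced_collineation: "collineation q point_image line_image"
proof (intro collineation.intro collineation_axioms.intro)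
  show "prime_plane q" by (rule prime_plane_axioms)
  show "point_image p \<in> points q" if "p \<in> points q" for p
    using point_image_copy[OF that] by blast
  show "line_image l \<in> lines q" if "l \<in> lines q" for l
    using line_image_copy[OF that] by blast
  show "p \<subseteq> l \<longleftrightarrow> point_image p \<subseteq> line_image l"
    if pl: "p \<in> points q" "l \<in> lines q" for p l
  proof -
    obtain i' where "f (Inl (p, 1)) = Inl (point_image p, i')" by (rule point_image_copy[OF pl(1)])
    moreover obtain j' where "f (Inr (l, 1)) = Inr (line_image l, j')"
      by (rule line_image_copy[OF pl(2)])
    moreover have "Inl (p, 1) \<in> V" "Inr (l, 1) \<in> V" using pl r_pos s_pos by simp_all
    ultimately show ?thesis using f_adj by fastforce
  qed
qed

lemma point_image_e1: "point_image e1 = e1"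
proof (rule ccontr)
  assume ne: "point_image e1 \<noteq> e1"
  have v: "Inl (e1, 1) \<in> V" "Inl (e1, 2) \<in> V" using e_points two_le_r by simp_all
  have c1: "colouring (Inl (e1, 1)) = r + s" by (simp add: colouring_Inl)
  obtain i1 where "Inl (point_image e1, i1) \<in> V" "colouring (Inl (point_image e1, i1)) = r + s"
    using f_point_copy[OF v(1)] c1 by metis
  then have e2: "point_image e1 = e2" using extra_colour_points ne by blast
  have c2: "colouring (Inl (e1, 2)) = 1" using e1_neq_e2 by (simp add: colouring_Inl)
  obtain i2 where "Inl (e2, i2) \<in> V" "colouring (Inl (e2, i2)) = 1"
    using f_point_copy[OF v(2)] c2 e2 by metis
  then show False using two_le_s by (auto simp: colouring_Inl split: if_splits)
qed

lemma point_image_e2: "point_image e2 = e2"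
proof (rule ccontr)
  assume ne: "point_image e2 \<noteq> e2"
  have v: "Inl (e2, 2) \<in> V" "Inl (e2, 1) \<in> V" using e_points two_le_r by simp_all
  have c1: "colouring (Inl (e2, 2)) = r + s" by (simp add: colouring_Inl)
  obtain i1 where "Inl (point_image e2, i1) \<in> V" "colouring (Inl (point_image e2, i1)) = r + s"
    using f_point_copy[OF v(1)] c1 by metis
  then have e1: "point_image e2 = e1" using extra_colour_points ne by blast
  have c2: "colouring (Inl (e2, 1)) = 0" using e1_neq_e2 by (simp add: colouring_Inl)
  obtain i2 where "Inl (e1, i2) \<in> V" "colouring (Inl (e1, i2)) = 0"
    using f_point_copy[OF v(2)] c2 e1 by metis
  then show False using two_le_s by (auto simp: colouring_Inl split: if_splits)
qed

lemma line_image_xyz: "line_image line_xyz = line_xyz"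
proof (rule ccontr)
  assume ne: "line_image line_xyz \<noteq> line_xyz"
  have v: "Inr (line_xyz, 1) \<in> V" "Inr (line_xyz, 2) \<in> V" using marked_lines two_le_s by simp_all
  have c1: "colouring (Inr (line_xyz, 1)) = r + s" by (simp add: colouring_Inr)
  obtain j1 where "Inr (line_image line_xyz, j1) \<in> V"
    "colouring (Inr (line_image line_xyz, j1)) = r + s"
    using f_line_copy[OF v(1)] c1 by metis
  then have marked: "line_image line_xyz = line_yx 1 \<or> line_image line_xyz = line_yx 2"
    using extra_colour_lines ne by blast
  have c2: "colouring (Inr (line_xyz, 2)) = r + 1" using marked_lines by (simp add: colouring_Inr)
  obtain j2 where "Inr (line_image line_xyz, j2) \<in> V"
    "colouring (Inr (line_image line_xyz, j2)) = r + 1"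
    using f_line_copy[OF v(2)] c2 by metis
  then show False using marked ne two_le_s by (auto simp: colouring_Inr split: if_splits)
qed

lemma line_image_marked:
  assumes "l = line_yx 1 \<or> l = line_yx 2"
  shows "line_image l = line_yx 1 \<or> line_image l = line_yx 2"
proof (rule ccontr)
  assume ne: "\<not> ?thesis"
  have xyz: "l \<noteq> line_xyz" using assms marked_lines by auto
  have v: "Inr (l, 2) \<in> V" "Inr (l, 1) \<in> V" using assms marked_lines two_le_s by auto
  have c1: "colouring (Inr (l, 2)) = r + s" using assms by (auto simp: colouring_Inr)
  obtain j1 where "Inr (line_image l, j1) \<in> V" "colouring (Inr (line_image l, j1)) = r + s"
    using f_line_copy[OF v(1)] c1 by metis
  then have l_xyz: "line_image l = line_xyz" using extra_colour_lines ne by blast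
  have c2: "colouring (Inr (l, 1)) = r" using xyz by (simp add: colouring_Inr)
  obtain j2 where "Inr (line_xyz, j2) \<in> V" "colouring (Inr (line_xyz, j2)) = r"
    using f_line_copy[OF v(2)] c2 l_xyz by metis
  then show False using marked_lines two_le_s by (auto simp: colouring_Inr split: if_splits)
qed

lemma point_image_e3: "point_image e3 = e3"
proof (rule ccontr)
  assume ne: "point_image e3 \<noteq> e3"
  interpret induced: collineation q point_image line_image by (rule induced_collineation)
  have distinct: "line_image (line_yx 1) \<noteq> line_image (line_yx 2)"
    using induced.lines_inj[OF marked_lines(2,3)] marked_lines(6) by blast
  have "point_image e3 \<subseteq> line_image (line_yx 1)" "point_image e3 \<subseteq> line_image (line_yx 2)"
    using induced.incidence[OF e_points(3)] marked_lines e3_on_marked_lines by simp_all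
  then have "point_image e3 \<subseteq> line_yx 1" "point_image e3 \<subseteq> line_yx 2"
    using line_image_marked[of "line_yx 1"] line_image_marked[of "line_yx 2"] distinct by auto
  then have "line_yx 1 = line_yx 2"
    using line_through_two_points_unique[OF e_points(3) induced.points_closed[OF e_points(3)]]
      ne marked_lines e3_on_marked_lines by simp
  then show False using marked_lines(6) by simp
qed

lemma induced_frame_fixing: "frame_fixing_collineation q point_image line_image"
  using induced_collineation point_image_e1 point_image_e2 point_image_e3 line_image_xyz
  by (simp add: frame_fixing_collineation_def frame_fixing_collineation_axioms_def)

theorem f_identity:
  assumes "v \<in> V"
  shows "f v = v"
  using assms
proof (cases rule: V_cases)
  case (point p i)
  obtain i' where i': "f (Inl (p, i)) = Inl (point_image p, i')" "Inl (point_image p, i') \<in> V"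
    "colouring (Inl (point_image p, i')) = colouring (Inl (p, i))"
    using f_point_copy assms point(1) by blast
  have "point_image p = p"
    using frame_fixing_collineation.fixes_all_points[OF induced_frame_fixing point(2)] .
  then show ?thesis using i' colouring_copies_inj(1) assms point(1) by auto
next
  case (line l j)
  obtain j' where j': "f (Inr (l, j)) = Inr (line_image l, j')" "Inr (line_image l, j') \<in> V"
    "colouring (Inr (line_image l, j')) = colouring (Inr (l, j))"
    using f_line_copy assms line(1) by blast
  have "line_image l = l"
    using collineation.fixed_lines_if_fixed_points[OF induced_collineation
        frame_fixing_collineation.fixes_all_points[OF induced_frame_fixing] line(2)] .
  then show ?thesis using j' colouring_copies_inj(2) assms line(1) by auto
qed

end

lemma (in lgk_colouring) distinguishing_colouring: "distinguishing V LGK_adj colouring"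
  unfolding distinguishing_def
proof (intro allI impI)
  fix f assume "graph_aut V LGK_adj f \<and> (\<forall>v\<in>V. colouring (f v) = colouring v)"
  then interpret colour_preserving_automorphism q r s f by unfold_locales auto
  show "\<forall>v\<in>V. f v = v" using f_identity by blast
qed

lemma (in lgk_colouring) chi_D_eq: "chi_D V LGK_adj = r + s + 1"
  unfolding chi_D_def
proof (rule Least_equality)
  have "colouring ` V \<subseteq> {..<r + s + 1}" using colouring_less by auto
  then show "\<exists>c. c ` V \<subseteq> {..<r + s + 1} \<and> proper_coloring V LGK_adj c \<and> distinguishing V LGK_adj c"
    using proper_colouring distinguishing_colouring by blast
  show "r + s + 1 \<le> k"
    if ex: "\<exists>c. c ` V \<subseteq> {..<k} \<and> proper_coloring V LGK_adj c \<and> distinguishing V LGK_adj c"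
    for k
  proof -
    obtain c where "c ` V \<subseteq> {..<k}" "proper_coloring V LGK_adj c" "distinguishing V LGK_adj c"
      using ex by blast
    then have "r + s < k" by (rule distinguishing_colouring_needs_extra_colour)
    then show ?thesis by simp
  qed
qed

theorem mainTheorem13:
  fixes q r s :: nat
  assumes "prime q" and "q \<ge> 5" and "r \<ge> 2" and "s \<ge> 2"
  shows "chi_D (LGK_verts q r s) LGK_adj = r + s + 1"
proof -
  interpret lgk_colouring q r s
    using assms by unfold_locales auto
  show ?thesis by (rule chi_D_eq)
qed

end
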